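(* Let $(M,d)$ be a separable metric space in which every closed bounded subset is compact. Let $(\Omega,\mathscr{F},\mathbb{P},\theta)$ be an ergodic measure-preserving dynamical system and let $\{f_\omega\}_{\omega\in\Omega}$ be a family of paracontraction maps $f_\omega\colon M\to M$ such that $(\omega,x)\mapsto f_\omega(x)$ is measurable. Let $\varphi(n,\omega,x)=f_{\theta^{n-1}(\omega)}\circ\cdots\circ f_\omega(x)$ be the induced random iteration of maps and let $$C_\varphi=\{x\in M\colon \mathbb{P}(\{\omega\in\Omega\colon f_\omega(x)=x\})=1\}.$$ Assume $C_\varphi\neq\emptyset$. Then for every $x\in M$, for $\mathbb{P}$-almost every $\omega$ the sequence $(\varphi(n,\omega,x))_{n\in\mathbb{N}}$ converges to some point of $C_\varphi$ (depending on $\omega$ and $x$).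
   Context: A continuous map $f\colon M\to M$ is a paracontraction if for every fixed point $x$ of $f$ and every $y$ that is not a fixed point of $f$, $d(f(y),x)<d(y,x)$ (and hence $d(f(y),x)\le d(y,x)$ for all $y$). An ergodic measure-preserving dynamical system $(\Omega,\mathscr{F},\mathbb{P},\theta)$ consists of a probability space and a measurable map $\theta\colon\Omega\to\Omega$ preserving $\mathbb{P}$ such that every $A\in\mathscr{F}$ with $\theta^{-1}(A)\subset A$ has $\mathbb{P}(A)\in\{0,1\}$. $M$ carries its Borel $\sigma$-algebra and $\Omega\times M$ the product $\sigma$-algebra. *)

theory Defs
  imports "HOL-Probability.Probability"
begin

definition paracontraction :: "('b::metric_space \<Rightarrow> 'b) \<Rightarrow> bool" where
  "paracontraction g \<longleftrightarrow> continuous_on UNIV g \<and>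
     (\<forall>x y. g x = x \<and> g y \<noteq> y \<longrightarrow> dist (g y) x < dist y x)"

definition ergodic_mpds :: "'a measure \<Rightarrow> ('a \<Rightarrow> 'a) \<Rightarrow> bool" where
  "ergodic_mpds P \<theta> \<longleftrightarrow> prob_space P \<and> \<theta> \<in> P \<rightarrow>\<^sub>M P \<and> distr P P \<theta> = P \<and>
     (\<forall>A \<in> sets P. \<theta> -` A \<inter> space P \<subseteq> A \<longrightarrow> measure P A = 0 \<or> measure P A = 1)"

primrec rand_iter :: "('a \<Rightarrow> 'b \<Rightarrow> 'b) \<Rightarrow> ('a \<Rightarrow> 'a) \<Rightarrow> nat \<Rightarrow> 'a \<Rightarrow> 'b \<Rightarrow> 'b" where
  "rand_iter f \<theta> 0 \<omega> x = x"
| "rand_iter f \<theta> (Suc n) \<omega> x = f ((\<theta> ^^ n) \<omega>) (rand_iter f \<theta> n \<omega> x)"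

definition common_fixed :: "'a measure \<Rightarrow> ('a \<Rightarrow> 'b \<Rightarrow> 'b) \<Rightarrow> 'b set" where
  "common_fixed P f = {x. measure P {\<omega> \<in> space P. f \<omega> x = x} = 1}"

end

theory Submission
  imports Defs
begin

text \<open>For almost every \<open>\<omega>\<close>, every map along the orbit \<open>\<theta>\<^sup>n \<omega>\<close> fixes all of
  \<open>C\<^sub>\<phi>\<close> (a countable dense subset suffices, by continuity), so \<open>d(\<phi>(n,\<omega>,x), q)\<close> is
  nonincreasing for every \<open>q \<in> C\<^sub>\<phi>\<close> at once. In a proper space such a Fejer monotone sequence
  converges to a point of \<open>C\<^sub>\<phi>\<close> as soon as its distance to \<open>C\<^sub>\<phi>\<close> gets arbitrarily small.

  Suppose instead that with probability \<open>c > 0\<close> the trajectory stays \<open>\<eta>\<close>-far from \<open>C\<^sub>\<phi>\<close>.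
  The compact set of such points within distance \<open>d(x,p)\<close> of a fixed \<open>p \<in> C\<^sub>\<phi>\<close> is covered by
  finitely many balls \<open>B(z, r\<^sub>z)\<close>, each with an event \<open>A\<^sub>z\<close> of positive probability on which the
  map lowers the distance to \<open>p\<close> by \<open>r\<^sub>z\<close> throughout \<open>B(z, 2r\<^sub>z)\<close>. By ergodicity the orbit
  enters every \<open>A\<^sub>z\<close> within a bounded time \<open>L\<close> with high probability, and unless the trajectory
  moves far in the meantime (which forces a definite drop of the distance to \<open>p\<close>, hence happens
  only boundedly often in expectation) it is then still in \<open>B(z, 2r\<^sub>z)\<close>. Counting expected
  drops up to time \<open>N\<close> gives a total decrease of order \<open>c N\<close>, while it is at most
  \<open>L d(x,p)\<close> on every path.\<close>

lemma countable_dense_subset: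
  fixes S T :: "'b::metric_space set"
  assumes "countable S" "closure S = UNIV"
  obtains D where "countable D" "D \<subseteq> T" "T \<subseteq> closure D"
proof
  define I where "I = {(s, n::nat). s \<in> S \<and> (\<exists>t\<in>T. dist s t < 1 / Suc n)}"
  define pick where "pick = (\<lambda>(s, n::nat). SOME t. t \<in> T \<and> dist s t < 1 / Suc n)"
  have "countable I"
    by (rule countable_subset[of _ "S \<times> UNIV"]) (auto simp: I_def intro: assms(1))
  then show "countable (pick ` I)" by simp
  have pick: "pick (s, n) \<in> T \<and> dist s (pick (s, n)) < 1 / Suc n" if "(s, n) \<in> I" for s n
  proof -
    from that have "\<exists>t. t \<in> T \<and> dist s t < 1 / Suc n" unfolding I_def by auto
    then show ?thesis unfolding pick_def prod.case by (rule someI_ex)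
  qed
  then show "pick ` I \<subseteq> T" by auto
  show "T \<subseteq> closure (pick ` I)"
  proof
    fix y assume y: "y \<in> T"
    show "y \<in> closure (pick ` I)" unfolding closure_approachable
    proof (intro allI impI)
      fix e :: real assume e: "e > 0"
      obtain n where n: "inverse (of_nat (Suc n)) < e / 2" using reals_Archimedean[of "e / 2"] e by auto
      have "y \<in> closure S" using assms(2) by simp
      then obtain s where s: "s \<in> S" "dist s y < 1 / Suc n"
        unfolding closure_approachable by (metis of_nat_0_less_iff zero_less_Suc divide_pos_pos zero_less_one)
      then have sI: "(s, n) \<in> I" unfolding I_def using y by auto
      have "dist (pick (s, n)) y \<le> dist s (pick (s, n)) + dist s y"
        by (metis dist_commute dist_triangle)
      then show "\<exists>x'\<in>pick ` I. dist x' y < e"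
        using pick[OF sI] s n sI by (intro bexI[of _ "pick (s, n)"]) (auto simp: inverse_eq_divide)
    qed
  qed
qed

lemma sets_Collect_ball_dense:
  fixes h :: "'a \<Rightarrow> 'b::metric_space \<Rightarrow> real"
  assumes S: "countable S" "closure S = UNIV"
    and U: "\<And>\<omega>. \<omega> \<in> space M \<Longrightarrow> open (U \<omega>)"
    and h: "\<And>\<omega>. \<omega> \<in> space M \<Longrightarrow> continuous_on UNIV (h \<omega>)"
    and meas: "\<And>s. s \<in> S \<Longrightarrow> {\<omega>\<in>space M. s \<in> U \<omega> \<longrightarrow> h \<omega> s \<le> b} \<in> sets M"
  shows "{\<omega>\<in>space M. \<forall>y\<in>U \<omega>. h \<omega> y \<le> b} \<in> sets M"
proof -
  have "(\<forall>y\<in>U \<omega>. h \<omega> y \<le> b) \<longleftrightarrow> (\<forall>s\<in>S. s \<in> U \<omega> \<longrightarrow> h \<omega> s \<le> b)" if \<omega>: "\<omega> \<in> space M" for \<omega>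
  proof
    assume dense: "\<forall>s\<in>S. s \<in> U \<omega> \<longrightarrow> h \<omega> s \<le> b"
    have "U \<omega> \<subseteq> closure (U \<omega> \<inter> S)"
      using open_Int_closure_subset[OF U[OF \<omega>], of S] S(2) by simp
    also have "\<dots> \<subseteq> {y. h \<omega> y \<le> b}"
      using dense by (intro closure_minimal closed_Collect_le continuous_on_const h[OF \<omega>]) auto
    finally show "\<forall>y\<in>U \<omega>. h \<omega> y \<le> b" by blast
  qed (use S in blast)
  then have "{\<omega>\<in>space M. \<forall>y\<in>U \<omega>. h \<omega> y \<le> b} = {\<omega>\<in>space M. \<forall>s\<in>S. s \<in> U \<omega> \<longrightarrow> h \<omega> s \<le> b}"
    by blast
  also have "\<dots> \<in> sets M"
    using meas S(1) by (intro sets.sets_Collect_countable_All') auto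
  finally show ?thesis .
qed

lemma sum_antimono_decrements_le:
  fixes a :: "nat \<Rightarrow> real"
  assumes "\<And>n. a (Suc n) \<le> a n" "\<And>n. 0 \<le> a n"
  shows "(\<Sum>n<N. a (i + n) - a (Suc (i + n))) \<le> a i"
proof -
  have "(\<Sum>n<N. a (i + n) - a (Suc (i + n))) = a i - a (i + N)"
    using sum_lessThan_telescope'[of "\<lambda>n. a (i + n)" N] by simp
  then show ?thesis using assms(2)[of "i + N"] by linarith
qed

lemma sum_antimono_gaps_le:
  fixes a :: "nat \<Rightarrow> real"
  assumes "\<And>n. a (Suc n) \<le> a n" "\<And>n. 0 \<le> a n"
  shows "(\<Sum>n<N. a n - a (n + L)) \<le> real L * a 0"
proof -
  have "(\<Sum>n<N. a n - a (n + L)) = (\<Sum>n<N. \<Sum>k<L. a (k + n) - a (Suc (k + n)))"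
  proof (rule sum.cong[OF refl])
    fix n show "a n - a (n + L) = (\<Sum>k<L. a (k + n) - a (Suc (k + n)))"
      using sum_lessThan_telescope'[of "\<lambda>k. a (k + n)" L] by (simp add: add.commute)
  qed
  also have "\<dots> = (\<Sum>k<L. \<Sum>n<N. a (k + n) - a (Suc (k + n)))" by (rule sum.swap)
  also have "\<dots> \<le> (\<Sum>k<L. a 0)"
    using sum_antimono_decrements_le[where a = a, OF assms] lift_Suc_antimono_le[of a, OF assms(1)]
    by (intro sum_mono) (meson order_trans le0)
  finally show ?thesis by simp
qed

lemma le_of_linear_bound:
  fixes a b K :: real
  assumes "\<And>N::nat. real N * a \<le> K + real N * b"
  shows "a \<le> b"
proof (rule ccontr)
  assume "\<not> a \<le> b"
  then have ab: "a - b > 0" by simp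
  obtain N :: nat where "K / (a - b) < N" using reals_Archimedean2 by blast
  then have "K < real N * (a - b)" using ab by (simp add: field_simps)
  then show False using assms[of N] by (simp add: algebra_simps)
qed

lemma Fejer_monotone_convergent:
  fixes y :: "nat \<Rightarrow> 'b::metric_space"
  assumes C: "closed C" "C \<noteq> {}" and K: "compact K" "\<And>n. y n \<in> K"
    and Fejer: "\<And>q m n. q \<in> C \<Longrightarrow> m \<le> n \<Longrightarrow> dist (y n) q \<le> dist (y m) q"
    and close: "\<And>e. e > 0 \<Longrightarrow> \<exists>n. infdist (y n) C < e"
  obtains c where "c \<in> C" "y \<longlonglongrightarrow> c"
proof -
  obtain l r where "strict_mono r" and lim: "(y \<circ> r) \<longlonglongrightarrow> l"
    using compact_imp_seq_compact[OF K(1)] K(2) unfolding seq_compact_def by metis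
  have infdist_antimono: "infdist (y n) C \<le> infdist (y m) C" if "m \<le> n" for m n
    using C(2) by (subst (2) infdist_notempty)
      (auto intro!: cINF_greatest order_trans[OF infdist_le Fejer[OF _ that]])
  have close_l: "infdist l C < e" if e: "e > 0" for e
  proof -
    obtain n where n: "infdist (y n) C < e / 2" using close e by (meson half_gt_zero)
    obtain k where k: "dist (y (r k)) l < e / 2" "n \<le> k"
      using metric_LIMSEQ_D[OF lim, of "e / 2"] e by (auto simp: comp_def) (meson nle_le)
    have "infdist (y (r k)) C < e / 2"
      using infdist_antimono[of n "r k"] seq_suble[OF \<open>strict_mono r\<close>, of k] k(2) n by linarith
    then show ?thesis
      using infdist_triangle[of l C "y (r k)"] k(1) by (simp add: dist_commute)
  qed
  have "infdist l C \<le> 0"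
    by (rule field_le_epsilon) (simp add: close_l less_imp_le)
  then have lC: "l \<in> C"
    using in_closed_iff_infdist_zero[OF C] infdist_nonneg[of l C] by simp
  have "y \<longlonglongrightarrow> l"
  proof (rule metric_LIMSEQ_I)
    fix e :: real assume "e > 0"
    then obtain k where "dist (y (r k)) l < e"
      using metric_LIMSEQ_D[OF lim] by (auto simp: comp_def)
    then show "\<exists>no. \<forall>n\<ge>no. dist (y n) l < e"
      using Fejer[OF lC] by (meson le_less_trans)
  qed
  with lC show ?thesis by (rule that)
qed

context prob_space
begin

lemma eventually_prob_incseq_ge:
  assumes "incseq B" "range B \<subseteq> events" "prob (\<Union>i. B i) = 1" "\<beta> > 0"
  shows "eventually (\<lambda>i. 1 - \<beta> \<le> prob (B i)) sequentially"
proof -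
  have "(\<lambda>i. prob (B i)) \<longlonglongrightarrow> 1"
    using finite_Lim_measure_incseq[OF assms(2,1)] assms(3) by simp
  then have "eventually (\<lambda>i. 1 - \<beta> < prob (B i)) sequentially"
    using assms(4) by (intro order_tendstoD(1)) auto
  then show ?thesis by eventually_elim simp
qed

lemma prob_pos_in_countable_cover:
  assumes "B \<subseteq> (\<Union>j::nat. A j)" "range A \<subseteq> events" "B \<in> events" "prob B > 0"
  obtains j where "prob (A j) > 0"
proof (rule ccontr)
  assume "\<not> thesis"
  with that have "prob (A j) = 0" for j by (meson measure_nonneg not_less order.antisym)
  then have "prob (\<Union>j. A j) = 0" using assms(2) by (rule measure_countably_zero[rotated])
  moreover have "prob B \<le> prob (\<Union>j. A j)" using assms(1-3) by (intro finite_measure_mono) auto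
  ultimately show False using assms(4) by simp
qed

lemma integral_indicator_event: "A \<in> events \<Longrightarrow> (\<integral>\<omega>. indicator A \<omega> \<partial>M) = prob A"
  by (simp add: Int_absorb2 sets.sets_into_space)

lemma prob_le_sum_of_AE_indicator_le:
  assumes "finite I" "A \<in> events" "\<And>i. i \<in> I \<Longrightarrow> B i \<in> events"
    and "AE \<omega> in M. indicator A \<omega> \<le> (\<Sum>i\<in>I. indicator (B i) \<omega> :: real)"
  shows "prob A \<le> (\<Sum>i\<in>I. prob (B i))"
proof -
  have "prob A = (\<integral>\<omega>. indicator A \<omega> \<partial>M)" using assms(2) by (simp add: integral_indicator_event)
  also have "\<dots> \<le> (\<integral>\<omega>. (\<Sum>i\<in>I. indicator (B i) \<omega> :: real) \<partial>M)"
    using assms by (intro integral_mono_AE)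
      (auto intro!: Bochner_Integration.integrable_sum integrable_real_indicator simp: less_top[symmetric])
  also have "\<dots> = (\<Sum>i\<in>I. prob (B i))"
    using assms by (subst Bochner_Integration.integral_sum)
      (auto intro!: integrable_real_indicator simp: integral_indicator_event less_top[symmetric])
  finally show ?thesis .
qed

lemma sum_prob_le_of_AE_weighted_count:
  assumes G: "\<And>n. G n \<in> events" and e: "e > 0"
    and count: "AE \<omega> in M. e * (\<Sum>n<N. indicator (G n) \<omega>) \<le> B"
  shows "(\<Sum>n<N. prob (G n)) \<le> B / e"
proof -
  have "e * (\<Sum>n<N. prob (G n)) = e * (\<integral>\<omega>. (\<Sum>n<N. indicator (G n) \<omega> :: real) \<partial>M)"
    using G by (subst Bochner_Integration.integral_sum)
      (auto intro!: integrable_real_indicator simp: integral_indicator_event less_top[symmetric])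
  also have "\<dots> = (\<integral>\<omega>. e * (\<Sum>n<N. indicator (G n) \<omega> :: real) \<partial>M)" by simp
  also have "\<dots> \<le> (\<integral>\<omega>. B \<partial>M)"
    using G count by (intro integral_mono_AE)
      (auto intro!: Bochner_Integration.integrable_sum integrable_real_indicator simp: less_top[symmetric])
  also have "\<dots> = B" by (simp add: prob_space)
  finally show ?thesis using e by (simp add: pos_le_divide_eq mult.commute)
qed

end

section \<open>Paracontractions\<close>

lemma paracontraction_dist_fixed_le:
  assumes "paracontraction g" "g p = p"
  shows "dist (g y) p \<le> dist y p"
  using assms unfolding paracontraction_def by (cases "g y = y") (auto intro: less_imp_le)

lemma paracontraction_uniform_decrease_near:
  assumes g: "paracontraction g" "g p = p" "g z \<noteq> z"
  obtains \<delta> where "\<delta> > 0" "\<And>y. dist z y < 2 * \<delta> \<Longrightarrow> dist (g y) p \<le> dist y p - \<delta>"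
proof -
  define gap where "gap = dist z p - dist (g z) p"
  have gap: "gap > 0" using g unfolding paracontraction_def gap_def by auto
  have "isCont g z" using g(1) unfolding paracontraction_def by (simp add: continuous_on_eq_continuous_at)
  then obtain \<epsilon> where \<epsilon>: "\<epsilon> > 0" "\<And>y. dist y z < \<epsilon> \<Longrightarrow> dist (g y) (g z) < gap / 4"
    unfolding continuous_at_eps_delta using gap by (metis zero_less_divide_iff zero_less_numeral)
  define \<delta> where "\<delta> = min (\<epsilon> / 2) (gap / 8)"
  show ?thesis
  proof (rule that[of \<delta>])
    fix y assume y: "dist z y < 2 * \<delta>"
    have "dist (g y) p \<le> dist (g y) (g z) + dist (g z) p" by (rule dist_triangle)
    moreover have "dist z p \<le> dist z y + dist y p" by (rule dist_triangle)
    moreover have "dist (g y) (g z) < gap / 4" using \<epsilon>(2) y by (simp add: \<delta>_def dist_commute)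
    moreover have "dist z y < gap / 4" "\<delta> \<le> gap / 8" using y by (auto simp: \<delta>_def)
    ultimately show "dist (g y) p \<le> dist y p - \<delta>"
      using gap unfolding gap_def by argo
  qed (use \<epsilon> gap in \<open>auto simp: \<delta>_def\<close>)
qed

lemma paracontraction_small_decrease_small_step:
  fixes g :: "'b::metric_space \<Rightarrow> 'b"
  assumes proper: "\<And>T::'b set. closed T \<Longrightarrow> bounded T \<Longrightarrow> compact T"
    and g: "paracontraction g" "g p = p" and \<tau>: "\<tau> > 0"
  obtains \<delta> where "\<delta> > 0" "\<And>y. dist y p \<le> \<rho> \<Longrightarrow> dist y p - dist (g y) p < \<delta> \<Longrightarrow> dist (g y) y < \<tau>"
proof -
  define F where "F = {y. dist y p \<le> \<rho> \<and> \<tau> \<le> dist (g y) y}"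
  have cont: "continuous_on UNIV g" using g(1) unfolding paracontraction_def by blast
  have "closed F" unfolding F_def
    by (intro closed_Collect_conj closed_Collect_le continuous_intros cont)
  moreover have "bounded F"
    by (rule bounded_subset[OF bounded_cball[of p \<rho>]]) (auto simp: F_def dist_commute)
  ultimately have "compact F" by (rule proper)
  have "\<exists>\<delta>>0. \<forall>y\<in>F. \<delta> \<le> dist y p - dist (g y) p"
  proof (cases "F = {}")
    case False
    have "continuous_on F (\<lambda>y. dist y p - dist (g y) p)"
      using continuous_on_subset[OF cont] by (intro continuous_intros) auto
    then obtain y0 where y0: "y0 \<in> F" "\<And>y. y \<in> F \<Longrightarrow> dist y0 p - dist (g y0) p \<le> dist y p - dist (g y) p"
      using continuous_attains_inf[OF \<open>compact F\<close> False] by blast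
    have "g y0 \<noteq> y0" using y0(1) \<tau> unfolding F_def by auto
    then have "dist y0 p - dist (g y0) p > 0" using g unfolding paracontraction_def by auto
    then show ?thesis using y0(2) by blast
  qed (auto intro!: exI[of _ 1])
  then obtain \<delta> where "\<delta> > 0" "\<And>y. y \<in> F \<Longrightarrow> \<delta> \<le> dist y p - dist (g y) p" by blast
  then show ?thesis by (intro that[of \<delta>]) (force simp: F_def)+
qed

section \<open>Random iteration of paracontractions\<close>

locale random_paracontraction = prob_space P for P :: "'a measure" +
  fixes \<theta> :: "'a \<Rightarrow> 'a" and f :: "'a \<Rightarrow> 'b::metric_space \<Rightarrow> 'b" and S :: "'b set"
  assumes countable_S: "countable S" and dense_S: "closure S = UNIV"
    and proper: "\<And>T::'b set. closed T \<Longrightarrow> bounded T \<Longrightarrow> compact T"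
    and \<theta>_measurable[measurable]: "\<theta> \<in> P \<rightarrow>\<^sub>M P"
    and \<theta>_preserving: "distr P P \<theta> = P"
    and ergodic: "\<And>A. A \<in> sets P \<Longrightarrow> \<theta> -` A \<inter> space P \<subseteq> A \<Longrightarrow> prob A = 0 \<or> prob A = 1"
    and f_paracontraction: "\<And>\<omega>. \<omega> \<in> space P \<Longrightarrow> paracontraction (f \<omega>)"
    and f_measurable: "(\<lambda>(\<omega>, x). f \<omega> x) \<in> P \<Otimes>\<^sub>M borel \<rightarrow>\<^sub>M borel"
begin

lemma iterate_measurable[measurable]: "\<theta> ^^ n \<in> P \<rightarrow>\<^sub>M P"
  by (rule measurable_compose_n[OF \<theta>_measurable])

lemma iterate_in_space: "\<omega> \<in> space P \<Longrightarrow> (\<theta> ^^ n) \<omega> \<in> space P"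
  using measurable_space[OF iterate_measurable] by blast

lemma distr_iterate: "distr P P (\<theta> ^^ n) = P"
proof (induction n)
  case (Suc n)
  have "distr P P (\<theta> ^^ Suc n) = distr (distr P P (\<theta> ^^ n)) P \<theta>"
    by (simp add: distr_distr[OF \<theta>_measurable iterate_measurable])
  also have "\<dots> = P" using Suc \<theta>_preserving by simp
  finally show ?case .
qed (simp add: id_def distr_id)

lemma prob_vimage_iterate: "A \<in> sets P \<Longrightarrow> prob ((\<theta> ^^ n) -` A \<inter> space P) = prob A"
  using measure_distr[OF iterate_measurable, of A n] distr_iterate[of n] by simp

lemma AE_iterate:
  assumes "AE \<omega> in P. Q \<omega>" "{\<omega>\<in>space P. Q \<omega>} \<in> sets P"
  shows "AE \<omega> in P. Q ((\<theta> ^^ n) \<omega>)"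
proof -
  have "AE \<omega> in distr P P (\<theta> ^^ n). Q \<omega>" by (subst distr_iterate) (rule assms(1))
  then show ?thesis using AE_distr_iff[OF iterate_measurable assms(2)] by simp
qed

lemma continuous_f: "\<omega> \<in> space P \<Longrightarrow> continuous_on UNIV (f \<omega>)"
  using f_paracontraction unfolding paracontraction_def by blast

lemma measurable_f_comp:
  "g \<in> M \<rightarrow>\<^sub>M P \<Longrightarrow> h \<in> M \<rightarrow>\<^sub>M borel \<Longrightarrow> (\<lambda>\<omega>. f (g \<omega>) (h \<omega>)) \<in> M \<rightarrow>\<^sub>M borel"
  using measurable_comp[OF measurable_Pair[of g M P h borel] f_measurable] by (simp add: o_def)

lemma measurable_f_point[measurable]: "(\<lambda>\<omega>. f \<omega> s) \<in> P \<rightarrow>\<^sub>M borel"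
  by (rule measurable_f_comp) auto

lemma measurable_rand_iter[measurable]: "(\<lambda>\<omega>. rand_iter f \<theta> n \<omega> x) \<in> P \<rightarrow>\<^sub>M borel"
  by (induction n) (auto intro!: measurable_f_comp)

text \<open>The class \<open>metric_space\<close> is not second countable, so \<open>measurable\<close> cannot
  derive these from \<open>borel_measurable_dist\<close>.\<close>
lemma borel_measurable_dist_f_point[measurable]:
  "(\<lambda>\<omega>. dist (f \<omega> s) q) \<in> borel_measurable P"
  by (rule borel_measurable_continuous_on[where f = "\<lambda>y. dist y q"]) (auto intro: continuous_intros)

lemma borel_measurable_dist_rand_iter[measurable]:
  "(\<lambda>\<omega>. dist (rand_iter f \<theta> n \<omega> x) q) \<in> borel_measurable P"
  "(\<lambda>\<omega>. dist q (rand_iter f \<theta> n \<omega> x)) \<in> borel_measurable P"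
  "(\<lambda>\<omega>. infdist (rand_iter f \<theta> n \<omega> x) A) \<in> borel_measurable P"
  by (rule borel_measurable_continuous_on; auto intro: continuous_intros)+

lemma fixed_event[measurable]: "{\<omega>\<in>space P. f \<omega> q = q} \<in> sets P"
proof -
  have "(\<lambda>\<omega>. f \<omega> q) -` {q} \<inter> space P \<in> sets P"
    by (rule measurable_sets[OF measurable_f_point]) (simp add: borel_closed)
  then show ?thesis by (simp add: vimage_def Int_def conj_commute)
qed

lemma common_fixed_iff_AE: "q \<in> common_fixed P f \<longleftrightarrow> (AE \<omega> in P. f \<omega> q = q)"
  unfolding common_fixed_def using prob_Collect_eq_1[OF fixed_event[of q]] by simp

lemma closed_common_fixed: "closed (common_fixed P f)"
  unfolding closed_sequential_limits
proof (intro allI impI, elim conjE)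
  fix q l assume q: "\<forall>n. q n \<in> common_fixed P f" and lim: "q \<longlonglongrightarrow> l"
  have "AE \<omega> in P. \<forall>n. f \<omega> (q n) = q n"
    using q by (simp add: AE_all_countable common_fixed_iff_AE)
  then have "AE \<omega> in P. f \<omega> l = l"
    using AE_space
  proof eventually_elim
    case (elim \<omega>)
    have "(\<lambda>n. f \<omega> (q n)) \<longlonglongrightarrow> f \<omega> l"
      using continuous_f[OF elim(2)] lim by (simp add: continuous_on_def tendsto_compose)
    with elim(1) lim show ?case by (simp add: LIMSEQ_unique)
  qed
  then show "l \<in> common_fixed P f" by (simp add: common_fixed_iff_AE)
qed

text \<open>Only countably many points of the common fixed set can be handled at once, so we pass
  through a countable dense subset and use that fixed-point sets of continuous maps are closed.\<close>
lemma AE_orbit_fixes_common_fixed: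
  "AE \<omega> in P. \<forall>n. \<forall>q\<in>common_fixed P f. f ((\<theta> ^^ n) \<omega>) q = q"
proof -
  obtain D where D: "countable D" "D \<subseteq> common_fixed P f" "common_fixed P f \<subseteq> closure D"
    using countable_dense_subset[OF countable_S dense_S] by blast
  have "AE \<omega> in P. \<forall>n. \<forall>q\<in>D. f ((\<theta> ^^ n) \<omega>) q = q"
    using D(1,2) by (auto simp: AE_all_countable AE_ball_countable common_fixed_iff_AE
        intro!: AE_iterate[where Q = "\<lambda>\<omega>. f \<omega> _ = _"])
  with AE_space show ?thesis
  proof eventually_elim
    case (elim \<omega>)
    show ?case
    proof (intro allI ballI)
      fix n q assume q: "q \<in> common_fixed P f"
      have "closed {y. f ((\<theta> ^^ n) \<omega>) y = y}"
        by (intro closed_Collect_eq continuous_f iterate_in_space elim continuous_on_id)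
      then have "closure D \<subseteq> {y. f ((\<theta> ^^ n) \<omega>) y = y}"
        using elim by (intro closure_minimal) auto
      then show "f ((\<theta> ^^ n) \<omega>) q = q" using q D(3) by auto
    qed
  qed
qed

definition typical :: "'a \<Rightarrow> bool" where
  "typical \<omega> \<longleftrightarrow> \<omega> \<in> space P \<and> (\<forall>n. \<forall>q\<in>common_fixed P f. f ((\<theta> ^^ n) \<omega>) q = q)"

lemma AE_typical: "AE \<omega> in P. typical \<omega>"
  unfolding typical_def using AE_orbit_fixes_common_fixed by (intro AE_conjI AE_space)

lemma dist_rand_iter_antimono:
  assumes "typical \<omega>" "q \<in> common_fixed P f" "m \<le> n"
  shows "dist (rand_iter f \<theta> n \<omega> y) q \<le> dist (rand_iter f \<theta> m \<omega> y) q"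
proof (rule lift_Suc_antimono_le[of "\<lambda>n. dist (rand_iter f \<theta> n \<omega> y) q", OF _ assms(3)])
  fix n
  have "paracontraction (f ((\<theta> ^^ n) \<omega>))" "f ((\<theta> ^^ n) \<omega>) q = q"
    using assms(1,2) f_paracontraction iterate_in_space unfolding typical_def by blast+
  then show "dist (rand_iter f \<theta> (Suc n) \<omega> y) q \<le> dist (rand_iter f \<theta> n \<omega> y) q"
    by (simp add: paracontraction_dist_fixed_le)
qed

lemma eventually_hitting:
  assumes A: "A \<in> sets P" "prob A > 0" and \<gamma>: "\<gamma> > 0"
  shows "eventually (\<lambda>M. 1 - \<gamma> \<le> prob {\<omega>\<in>space P. \<exists>m<M. (\<theta> ^^ m) \<omega> \<in> A}) sequentially"
proof -
  note A(1)[measurable]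
  define H where "H M = {\<omega>\<in>space P. \<exists>m<M. (\<theta> ^^ m) \<omega> \<in> A}" for M
  define Hits where "Hits = {\<omega>\<in>space P. \<exists>m. (\<theta> ^^ m) \<omega> \<in> A}"
  have H_sets: "range H \<subseteq> sets P" unfolding H_def by auto
  have Hits_sets: "Hits \<in> sets P" unfolding Hits_def by measurable
  have "\<theta> -` Hits \<inter> space P \<subseteq> Hits"
  proof
    fix \<omega> assume \<omega>: "\<omega> \<in> \<theta> -` Hits \<inter> space P"
    then obtain m where "(\<theta> ^^ m) (\<theta> \<omega>) \<in> A" unfolding Hits_def by auto
    then have "(\<theta> ^^ Suc m) \<omega> \<in> A" by (simp add: funpow_Suc_right del: funpow.simps)
    then show "\<omega> \<in> Hits" using \<omega> unfolding Hits_def by blast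
  qed
  then have "prob Hits = 0 \<or> prob Hits = 1" using ergodic Hits_sets by blast
  moreover have "prob A \<le> prob Hits"
  proof (rule finite_measure_mono[OF _ Hits_sets])
    show "A \<subseteq> Hits" unfolding Hits_def using sets.sets_into_space[OF A(1)]
      by (auto intro: exI[of _ 0])
  qed
  moreover have "(\<Union>M. H M) = Hits" unfolding H_def Hits_def by auto
  moreover have "incseq H" unfolding H_def incseq_def by (fastforce intro: less_le_trans)
  ultimately show ?thesis
    using A(2) H_sets \<gamma> eventually_prob_incseq_ge[of H] unfolding H_def by auto
qed

lemma exists_uniform_decrease_event:
  assumes z: "z \<notin> common_fixed P f" and p: "p \<in> common_fixed P f"
  obtains r A where "r > 0" "A \<in> sets P" "prob A > 0"
    "\<And>\<omega> y. \<omega> \<in> A \<Longrightarrow> dist z y < 2 * r \<Longrightarrow> dist (f \<omega> y) p \<le> dist y p - r"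
proof -
  define A where "A j = {\<omega>\<in>space P. \<forall>y\<in>ball z (2 / Suc j). dist (f \<omega> y) p - dist y p \<le> - (1 / Suc j)}"
    for j :: nat
  have A_sets: "A j \<in> sets P" for j
    unfolding A_def using continuous_f
    by (intro sets_Collect_ball_dense[OF countable_S dense_S]) (auto intro!: continuous_intros)
  define B where "B = {\<omega>\<in>space P. f \<omega> z \<noteq> z \<and> f \<omega> p = p}"
  have B_sets: "B \<in> sets P" unfolding B_def by measurable
  have B_cover: "B \<subseteq> (\<Union>j. A j)"
  proof
    fix \<omega> assume "\<omega> \<in> B"
    then have \<omega>: "\<omega> \<in> space P" "f \<omega> z \<noteq> z" "f \<omega> p = p" unfolding B_def by auto
    obtain \<delta> where \<delta>: "\<delta> > 0" "\<And>y. dist z y < 2 * \<delta> \<Longrightarrow> dist (f \<omega> y) p \<le> dist y p - \<delta>"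
      using paracontraction_uniform_decrease_near[OF f_paracontraction \<omega>(3,2)] \<omega>(1) by blast
    obtain j where j: "1 / Suc j < \<delta>" using reals_Archimedean[OF \<delta>(1)] by (auto simp: inverse_eq_divide)
    have "\<omega> \<in> A j" unfolding A_def mem_Collect_eq
    proof (intro conjI \<omega>(1) ballI)
      fix y assume "y \<in> ball z (2 / Suc j)"
      then have "dist z y < 2 * \<delta>" using j by simp
      then show "dist (f \<omega> y) p - dist y p \<le> - (1 / Suc j)" using \<delta>(2) j by fastforce
    qed
    then show "\<omega> \<in> (\<Union>j. A j)" by blast
  qed
  have "\<not> (AE \<omega> in P. \<omega> \<notin> B)"
  proof
    assume "AE \<omega> in P. \<omega> \<notin> B"
    moreover have "AE \<omega> in P. f \<omega> p = p" using p common_fixed_iff_AE by blast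
    ultimately have "AE \<omega> in P. f \<omega> z = z" using AE_space by eventually_elim (auto simp: B_def)
    then show False using z common_fixed_iff_AE by blast
  qed
  then have "prob B > 0" using prob_eq_0[OF B_sets] measure_nonneg[of P B] by linarith
  then obtain j where "prob (A j) > 0"
    using prob_pos_in_countable_cover[OF B_cover _ B_sets] A_sets by blast
  then show ?thesis using A_sets
    by (intro that[of "1 / Suc j" "A j"]) (auto simp: A_def ball_def)
qed

lemma exists_small_step_event:
  assumes p: "p \<in> common_fixed P f" and \<tau>: "\<tau> > 0" and \<beta>: "\<beta> > 0"
  obtains d Q where "d > 0" "Q \<in> sets P" "1 - \<beta> \<le> prob Q"
    "\<And>\<omega> y. \<omega> \<in> Q \<Longrightarrow> dist y p \<le> R \<Longrightarrow> dist y p - dist (f \<omega> y) p < d \<Longrightarrow> dist (f \<omega> y) y \<le> \<tau>"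
proof -
  define U where "U i \<omega> = {y. dist y p < R + 1 \<and> dist y p - dist (f \<omega> y) p < 1 / Suc i}" for i :: nat and \<omega>
  define Q where "Q i = {\<omega>\<in>space P. \<forall>y\<in>U i \<omega>. dist (f \<omega> y) y \<le> \<tau>}" for i
  have Q_sets: "Q i \<in> sets P" for i
    unfolding Q_def
  proof (rule sets_Collect_ball_dense[OF countable_S dense_S])
    fix \<omega> assume "\<omega> \<in> space P"
    note continuous_f[OF this]
    then show "open (U i \<omega>)" "continuous_on UNIV (\<lambda>y. dist (f \<omega> y) y)"
      unfolding U_def by (intro open_Collect_conj open_Collect_less continuous_intros; simp)+
  next
    show "{\<omega>\<in>space P. s \<in> U i \<omega> \<longrightarrow> dist (f \<omega> s) s \<le> \<tau>} \<in> sets P" for s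
      unfolding U_def by measurable
  qed
  have "U (Suc i) \<omega> \<subseteq> U i \<omega>" for i \<omega>
    unfolding U_def by (auto elim!: less_le_trans intro: frac_le)
  then have "incseq Q" unfolding Q_def by (intro incseq_SucI) blast
  have "{\<omega>\<in>space P. f \<omega> p = p} \<subseteq> (\<Union>i. Q i)"
  proof
    fix \<omega> assume "\<omega> \<in> {\<omega>\<in>space P. f \<omega> p = p}"
    then have \<omega>: "\<omega> \<in> space P" "f \<omega> p = p" by auto
    obtain \<delta> where \<delta>: "\<delta> > 0"
      "\<And>y. dist y p \<le> R + 1 \<Longrightarrow> dist y p - dist (f \<omega> y) p < \<delta> \<Longrightarrow> dist (f \<omega> y) y < \<tau>"
      using paracontraction_small_decrease_small_step[OF proper f_paracontraction[OF \<omega>(1)] \<omega>(2) \<tau>]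
      by blast
    obtain i where i: "1 / Suc i < \<delta>" using reals_Archimedean[OF \<delta>(1)] by (auto simp: inverse_eq_divide)
    have "\<omega> \<in> Q i" unfolding Q_def U_def using \<omega>(1) \<delta>(2) i by (force intro: less_imp_le)
    then show "\<omega> \<in> (\<Union>i. Q i)" by blast
  qed
  then have "prob {\<omega>\<in>space P. f \<omega> p = p} \<le> prob (\<Union>i. Q i)"
    using Q_sets by (intro finite_measure_mono) auto
  moreover have "prob {\<omega>\<in>space P. f \<omega> p = p} = 1" using p unfolding common_fixed_def by simp
  ultimately have "prob (\<Union>i. Q i) = 1" using prob_le_1[of "\<Union>i. Q i"] by linarith
  then obtain i where "1 - \<beta> \<le> prob (Q i)"
    using eventually_prob_incseq_ge[OF \<open>incseq Q\<close> _ _ \<beta>] Q_sets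
    by (auto simp: eventually_sequentially)
  then show ?thesis using Q_sets
    by (intro that[of "1 / Suc i" "Q i"]) (auto simp: Q_def U_def)
qed

lemma finite_decrease_cover:
  assumes K: "compact K" "K \<inter> common_fixed P f = {}" and p: "p \<in> common_fixed P f"
  obtains Z r A where "finite Z" "K \<subseteq> (\<Union>z\<in>Z. ball z (r z))"
    "\<And>z. z \<in> Z \<Longrightarrow> r z > 0" "\<And>z. z \<in> Z \<Longrightarrow> A z \<in> sets P" "\<And>z. z \<in> Z \<Longrightarrow> prob (A z) > 0"
    "\<And>z \<omega> y. z \<in> Z \<Longrightarrow> \<omega> \<in> A z \<Longrightarrow> dist z y < 2 * r z \<Longrightarrow> dist (f \<omega> y) p \<le> dist y p - r z"
proof -
  have "\<forall>z\<in>K. \<exists>r A. r > 0 \<and> A \<in> sets P \<and> prob A > 0 \<and>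
      (\<forall>\<omega>\<in>A. \<forall>y. dist z y < 2 * r \<longrightarrow> dist (f \<omega> y) p \<le> dist y p - r)"
  proof
    fix z assume "z \<in> K"
    then have "z \<notin> common_fixed P f" using K(2) by blast
    then obtain r A where "r > 0" "A \<in> sets P" "prob A > 0"
      "\<And>\<omega> y. \<omega> \<in> A \<Longrightarrow> dist z y < 2 * r \<Longrightarrow> dist (f \<omega> y) p \<le> dist y p - r"
      using exists_uniform_decrease_event[OF _ p] by blast
    then show "\<exists>r A. r > 0 \<and> A \<in> sets P \<and> prob A > 0 \<and>
      (\<forall>\<omega>\<in>A. \<forall>y. dist z y < 2 * r \<longrightarrow> dist (f \<omega> y) p \<le> dist y p - r)" by blast
  qed
  from bchoice[OF this] obtain r where "\<forall>z\<in>K. \<exists>A. r z > 0 \<and> A \<in> sets P \<and> prob A > 0 \<and>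
      (\<forall>\<omega>\<in>A. \<forall>y. dist z y < 2 * r z \<longrightarrow> dist (f \<omega> y) p \<le> dist y p - r z)" ..
  from bchoice[OF this] obtain A where rA: "\<forall>z\<in>K. r z > 0 \<and> A z \<in> sets P \<and> prob (A z) > 0 \<and>
      (\<forall>\<omega>\<in>A z. \<forall>y. dist z y < 2 * r z \<longrightarrow> dist (f \<omega> y) p \<le> dist y p - r z)" ..
  obtain Z where "Z \<subseteq> K" "finite Z" "K \<subseteq> (\<Union>z\<in>Z. ball z (r z))"
    using compactE_image[OF K(1), of K "\<lambda>z. ball z (r z)"] rA by force
  then show ?thesis using rA by (intro that[of Z r A]) auto
qed

end

section \<open>The escape estimate\<close>

text \<open>The data of the counting argument, as chosen in the proof of \<open>prob_far_forever_eq_0\<close>;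
  \<open>E\<close> is the event that the trajectory of \<open>x\<close> stays away from the common fixed set.\<close>
locale escape_estimate = random_paracontraction P \<theta> f S
  for P :: "'a measure" and \<theta> :: "'a \<Rightarrow> 'a" and f :: "'a \<Rightarrow> 'b::metric_space \<Rightarrow> 'b" and S :: "'b set" +
  fixes x p :: 'b and R :: real and Z :: "'b set" and r :: "'b \<Rightarrow> real" and A :: "'b \<Rightarrow> 'a set"
    and L :: nat and \<gamma> \<tau> d \<beta> :: real and Q E :: "'a set"
  assumes p_common: "p \<in> common_fixed P f" and R: "dist x p \<le> R"
    and finite_Z: "finite Z" and r_pos: "\<And>z. z \<in> Z \<Longrightarrow> r z > 0"
    and A_sets: "\<And>z. z \<in> Z \<Longrightarrow> A z \<in> sets P"
    and A_decrease: "\<And>z \<omega> y. z \<in> Z \<Longrightarrow> \<omega> \<in> A z \<Longrightarrow> dist z y < 2 * r z \<Longrightarrow> dist (f \<omega> y) p \<le> dist y p - r z"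
    and A_hit: "\<And>z. z \<in> Z \<Longrightarrow> 1 - \<gamma> \<le> prob {\<omega>\<in>space P. \<exists>k<L. (\<theta> ^^ k) \<omega> \<in> A z}"
    and \<tau>_nonneg: "\<tau> \<ge> 0" and step_bound: "\<And>z. z \<in> Z \<Longrightarrow> real L * \<tau> \<le> r z"
    and d_pos: "d > 0" and Q_sets: "Q \<in> sets P" and Q_prob: "1 - \<beta> \<le> prob Q"
    and Q_small_step: "\<And>\<omega> y. \<omega> \<in> Q \<Longrightarrow> dist y p \<le> R \<Longrightarrow> dist y p - dist (f \<omega> y) p < d \<Longrightarrow> dist (f \<omega> y) y \<le> \<tau>"
    and E_sets: "E \<in> sets P"
    and E_covered: "AE \<omega> in P. \<omega> \<in> E \<longrightarrow> (\<forall>n. rand_iter f \<theta> n \<omega> x \<in> (\<Union>z\<in>Z. ball z (r z)))"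
begin

abbreviation traj :: "nat \<Rightarrow> 'a \<Rightarrow> 'b" where
  "traj n \<omega> \<equiv> rand_iter f \<theta> n \<omega> x"

lemma traj_dist_antimono: "typical \<omega> \<Longrightarrow> m \<le> n \<Longrightarrow> dist (traj n \<omega>) p \<le> dist (traj m \<omega>) p"
  using dist_rand_iter_antimono p_common by blast

lemma traj_dist_le: "typical \<omega> \<Longrightarrow> dist (traj n \<omega>) p \<le> R"
  using traj_dist_antimono[of \<omega> 0 n] R by simp

definition hit_soon :: "'b \<Rightarrow> 'a set" where
  "hit_soon z = {\<omega>\<in>space P. \<exists>k<L. (\<theta> ^^ k) \<omega> \<in> A z}"

definition near :: "'b \<Rightarrow> nat \<Rightarrow> 'a set" where
  "near z n = {\<omega>\<in>space P. dist z (traj n \<omega>) < r z}"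

definition big_drop :: "nat \<Rightarrow> 'a set" where
  "big_drop j = {\<omega>\<in>space P. d \<le> dist (traj j \<omega>) p - dist (traj (Suc j) \<omega>) p}"

definition off_Q :: "nat \<Rightarrow> 'a set" where
  "off_Q j = (\<theta> ^^ j) -` (space P - Q) \<inter> space P"

definition irregular :: "nat \<Rightarrow> 'a set" where
  "irregular n = (\<Union>i<L. big_drop (n + i) \<union> off_Q (n + i))"

definition forced :: "'b \<Rightarrow> nat \<Rightarrow> 'a set" where
  "forced z n = near z n \<inter> ((\<theta> ^^ n) -` hit_soon z \<inter> space P) - irregular n"

lemma hit_soon_sets: "z \<in> Z \<Longrightarrow> hit_soon z \<in> sets P"
  using A_sets[of z] unfolding hit_soon_def by measurable

lemma escape_events[measurable]:
  "near z n \<in> sets P" "big_drop j \<in> sets P" "off_Q j \<in> sets P" "irregular n \<in> sets P"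
  using Q_sets unfolding near_def big_drop_def off_Q_def irregular_def by measurable

lemma forced_sets: "z \<in> Z \<Longrightarrow> forced z n \<in> sets P"
  using hit_soon_sets[of z] unfolding forced_def by measurable

lemma regular_slow:
  assumes "typical \<omega>" "\<omega> \<notin> irregular n" "j \<le> L"
  shows "dist (traj (n + j) \<omega>) (traj n \<omega>) \<le> j * \<tau>"
  using assms(3)
proof (induction j)
  case (Suc j)
  have \<omega>: "\<omega> \<in> space P" using assms(1) unfolding typical_def by blast
  have "\<omega> \<notin> big_drop (n + j)" "\<omega> \<notin> off_Q (n + j)"
    using assms(2) Suc.prems unfolding irregular_def by auto
  then have "dist (traj (n + j) \<omega>) p - dist (traj (Suc (n + j)) \<omega>) p < d" "(\<theta> ^^ (n + j)) \<omega> \<in> Q"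
    using \<omega> iterate_in_space[OF \<omega>] unfolding big_drop_def off_Q_def by auto
  then have "dist (traj (Suc (n + j)) \<omega>) (traj (n + j) \<omega>) \<le> \<tau>"
    using Q_small_step traj_dist_le[OF assms(1)] by simp
  moreover have "dist (traj (Suc (n + j)) \<omega>) (traj n \<omega>)
      \<le> dist (traj (Suc (n + j)) \<omega>) (traj (n + j) \<omega>) + dist (traj (n + j) \<omega>) (traj n \<omega>)"
    by (rule dist_triangle)
  ultimately show ?case using Suc by (simp add: algebra_simps)
qed simp

text \<open>Unless the trajectory jumps, it is still within \<open>2 r z\<close> of \<open>z\<close> when the orbit hits \<open>A z\<close>.\<close>
lemma forced_drop:
  assumes \<omega>: "typical \<omega>" and z: "z \<in> Z" and forced: "\<omega> \<in> forced z n"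
  shows "r z \<le> dist (traj n \<omega>) p - dist (traj (n + L) \<omega>) p"
proof -
  have near: "dist z (traj n \<omega>) < r z" and regular: "\<omega> \<notin> irregular n"
    and "(\<theta> ^^ n) \<omega> \<in> hit_soon z"
    using forced unfolding forced_def near_def by auto
  then obtain k where k: "k < L" "(\<theta> ^^ k) ((\<theta> ^^ n) \<omega>) \<in> A z" unfolding hit_soon_def by auto
  then have hit: "(\<theta> ^^ (n + k)) \<omega> \<in> A z" by (simp add: funpow_add add.commute)
  have "dist (traj (n + k) \<omega>) (traj n \<omega>) \<le> real k * \<tau>"
    using regular_slow[OF \<omega> regular, of k] k(1) by simp
  also have "\<dots> \<le> real L * \<tau>" using k(1) \<tau>_nonneg by (intro mult_right_mono) auto
  finally have "dist (traj (n + k) \<omega>) (traj n \<omega>) \<le> real L * \<tau>" .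
  then have "dist z (traj (n + k) \<omega>) < 2 * r z"
    using near step_bound[OF z] dist_triangle[of z "traj (n + k) \<omega>" "traj n \<omega>"]
    by (simp add: dist_commute)
  then have "dist (traj (Suc (n + k)) \<omega>) p \<le> dist (traj (n + k) \<omega>) p - r z"
    using A_decrease[OF z hit] by simp
  moreover have "dist (traj (n + L) \<omega>) p \<le> dist (traj (Suc (n + k)) \<omega>) p"
    using traj_dist_antimono[OF \<omega>, of "Suc (n + k)" "n + L"] k(1) by linarith
  moreover have "dist (traj (n + k) \<omega>) p \<le> dist (traj n \<omega>) p"
    using traj_dist_antimono[OF \<omega>] by simp
  ultimately show ?thesis by linarith
qed

lemma prob_E_le_sum_near: "prob E \<le> (\<Sum>z\<in>Z. prob (near z n))"
proof (rule prob_le_sum_of_AE_indicator_le[OF finite_Z E_sets])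
  show "AE \<omega> in P. indicator E \<omega> \<le> (\<Sum>z\<in>Z. indicator (near z n) \<omega> :: real)"
    using E_covered AE_space
  proof eventually_elim
    case (elim \<omega>)
    show ?case
    proof (cases "\<omega> \<in> E")
      case True
      then obtain z where z: "z \<in> Z" "\<omega> \<in> near z n" using elim unfolding near_def by auto
      then have "(1::real) \<le> (\<Sum>z\<in>Z. indicator (near z n) \<omega>)"
        using member_le_sum[of z Z "\<lambda>z. indicator (near z n) \<omega> :: real"] finite_Z by auto
      with True show ?thesis by simp
    qed (simp add: sum_nonneg)
  qed
qed simp

lemma prob_near_le: 
  assumes z: "z \<in> Z"
  shows "prob (near z n) \<le> prob (forced z n) + \<gamma> + prob (irregular n)"
proof -
  define H where "H = (\<theta> ^^ n) -` hit_soon z \<inter> space P"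
  have H_sets: "H \<in> sets P" unfolding H_def using hit_soon_sets[OF z] by measurable
  have "prob H = prob (hit_soon z)" unfolding H_def by (rule prob_vimage_iterate[OF hit_soon_sets[OF z]])
  then have miss: "prob (space P - H) \<le> \<gamma>"
    using prob_compl[OF H_sets] A_hit[OF z] unfolding hit_soon_def by linarith
  have "near z n \<subseteq> forced z n \<union> (space P - H) \<union> irregular n"
    unfolding forced_def H_def near_def by auto
  then have "prob (near z n) \<le> prob (forced z n \<union> (space P - H) \<union> irregular n)"
    using forced_sets[OF z] H_sets by (intro finite_measure_mono) auto
  also have "\<dots> \<le> prob (forced z n) + prob (space P - H) + prob (irregular n)"
    using forced_sets[OF z] H_sets
    by (intro order_trans[OF measure_Un_le] add_right_mono measure_Un_le) auto
  finally show ?thesis using miss by linarith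
qed

lemma sum_prob_forced_le:
  assumes z: "z \<in> Z"
  shows "(\<Sum>n<N. prob (forced z n)) \<le> real L * R / r z"
proof (rule sum_prob_le_of_AE_weighted_count[OF forced_sets[OF z] r_pos[OF z]])
  show "AE \<omega> in P. r z * (\<Sum>n<N. indicator (forced z n) \<omega>) \<le> real L * R"
    using AE_typical
  proof eventually_elim
    case (elim \<omega>)
    let ?a = "\<lambda>n. dist (traj n \<omega>) p"
    have "r z * (\<Sum>n<N. indicator (forced z n) \<omega>) = (\<Sum>n<N. r z * indicator (forced z n) \<omega>)"
      by (simp add: sum_distrib_left)
    also have "\<dots> \<le> (\<Sum>n<N. ?a n - ?a (n + L))"
      using forced_drop[OF elim z] traj_dist_antimono[OF elim]
      by (intro sum_mono) (simp add: indicator_def)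
    also have "\<dots> \<le> real L * ?a 0"
      by (rule sum_antimono_gaps_le[where a = ?a, OF traj_dist_antimono[OF elim less_imp_le[OF lessI]] zero_le_dist])
    also have "\<dots> \<le> real L * R" using R by (simp add: mult_left_mono)
    finally show ?case .
  qed
qed

lemma sum_prob_big_drop_le: "(\<Sum>n<N. prob (big_drop (i + n))) \<le> R / d"
proof (rule sum_prob_le_of_AE_weighted_count[OF escape_events(2) d_pos])
  show "AE \<omega> in P. d * (\<Sum>n<N. indicator (big_drop (i + n)) \<omega>) \<le> R"
    using AE_typical
  proof eventually_elim
    case (elim \<omega>)
    let ?a = "\<lambda>n. dist (traj n \<omega>) p"
    have "d * (\<Sum>n<N. indicator (big_drop (i + n)) \<omega>) = (\<Sum>n<N. d * indicator (big_drop (i + n)) \<omega>)"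
      by (simp add: sum_distrib_left)
    also have "\<dots> \<le> (\<Sum>n<N. ?a (i + n) - ?a (Suc (i + n)))"
      using traj_dist_antimono[OF elim, of "i + _" "Suc (i + _)"]
      by (intro sum_mono) (auto simp: indicator_def big_drop_def)
    also have "\<dots> \<le> ?a i"
      by (rule sum_antimono_decrements_le[where a = ?a, OF traj_dist_antimono[OF elim less_imp_le[OF lessI]] zero_le_dist])
    also have "\<dots> \<le> R" by (rule traj_dist_le[OF elim])
    finally show ?case .
  qed
qed

lemma prob_irregular_le: "prob (irregular n) \<le> (\<Sum>i<L. prob (big_drop (n + i))) + real L * \<beta>"
proof -
  have off_Q: "prob (off_Q j) \<le> \<beta>" for j
    using prob_vimage_iterate[of "space P - Q" j] prob_compl[OF Q_sets] Q_prob Q_sets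
    unfolding off_Q_def by auto
  have "prob (irregular n) \<le> (\<Sum>i<L. prob (big_drop (n + i) \<union> off_Q (n + i)))"
    unfolding irregular_def by (rule measure_UNION_le) auto
  also have "\<dots> \<le> (\<Sum>i<L. prob (big_drop (n + i)) + \<beta>)"
    using off_Q by (intro sum_mono order_trans[OF measure_Un_le] add_left_mono) auto
  finally show ?thesis by (simp add: sum.distrib)
qed

lemma sum_prob_irregular_le:
  "(\<Sum>n<N. prob (irregular n)) \<le> real N * real L * \<beta> + real L * R / d"
proof -
  have "(\<Sum>n<N. prob (irregular n)) \<le> (\<Sum>n<N. (\<Sum>i<L. prob (big_drop (n + i))) + real L * \<beta>)"
    by (intro sum_mono prob_irregular_le)
  also have "\<dots> = (\<Sum>i<L. \<Sum>n<N. prob (big_drop (i + n))) + real N * real L * \<beta>"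
    by (simp add: sum.distrib sum.swap[of _ "{..<N}"] add.commute)
  also have "(\<Sum>i<L. \<Sum>n<N. prob (big_drop (i + n))) \<le> (\<Sum>i<L. R / d)"
    by (intro sum_mono sum_prob_big_drop_le)
  finally show ?thesis by simp
qed

theorem prob_escape_le: "prob E \<le> card Z * (\<gamma> + real L * \<beta>)"
proof (rule le_of_linear_bound)
  fix N :: nat
  have "real N * prob E \<le> (\<Sum>n<N. \<Sum>z\<in>Z. prob (near z n))"
    using sum_mono[OF prob_E_le_sum_near, of "{..<N}"] by simp
  also have "\<dots> = (\<Sum>z\<in>Z. \<Sum>n<N. prob (near z n))" by (rule sum.swap)
  also have "\<dots> \<le> (\<Sum>z\<in>Z. \<Sum>n<N. prob (forced z n) + \<gamma> + prob (irregular n))"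
    by (intro sum_mono prob_near_le)
  also have "\<dots> = (\<Sum>z\<in>Z. (\<Sum>n<N. prob (forced z n)) + real N * \<gamma> + (\<Sum>n<N. prob (irregular n)))"
    by (simp add: sum.distrib)
  also have "\<dots> \<le> (\<Sum>z\<in>Z. real L * R / r z + real N * \<gamma> + (real N * real L * \<beta> + real L * R / d))"
    by (intro sum_mono add_mono sum_prob_forced_le sum_prob_irregular_le order_refl)
  also have "\<dots> = ((\<Sum>z\<in>Z. real L * R / r z) + card Z * (real L * R / d))
      + real N * (card Z * (\<gamma> + real L * \<beta>))"
    by (simp add: sum.distrib algebra_simps)
  finally show "real N * prob E \<le> \<dots>" .
qed

end

section \<open>Convergence\<close>

context random_paracontraction
begin

lemma far_region_decrease_cover:
  assumes p: "p \<in> common_fixed P f" and \<eta>: "\<eta> > 0"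
  obtains Z r A where "finite Z"
    "{y. dist y p \<le> R \<and> \<eta> \<le> infdist y (common_fixed P f)} \<subseteq> (\<Union>z\<in>Z. ball z (r z))"
    "\<And>z. z \<in> Z \<Longrightarrow> r z > 0" "\<And>z. z \<in> Z \<Longrightarrow> A z \<in> sets P" "\<And>z. z \<in> Z \<Longrightarrow> prob (A z) > 0"
    "\<And>z \<omega> y. z \<in> Z \<Longrightarrow> \<omega> \<in> A z \<Longrightarrow> dist z y < 2 * r z \<Longrightarrow> dist (f \<omega> y) p \<le> dist y p - r z"
proof (rule finite_decrease_cover[OF _ _ p])
  show "compact {y. dist y p \<le> R \<and> \<eta> \<le> infdist y (common_fixed P f)}"
    by (intro proper closed_Collect_conj closed_Collect_le continuous_intros
        bounded_subset[OF bounded_cball[of p R]]) (auto simp: dist_commute)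
  show "{y. dist y p \<le> R \<and> \<eta> \<le> infdist y (common_fixed P f)} \<inter> common_fixed P f = {}"
    using \<eta> by auto
qed (rule that)

lemma exists_uniform_hitting_time:
  assumes "finite Z" "\<And>z. z \<in> Z \<Longrightarrow> A z \<in> sets P" "\<And>z. z \<in> Z \<Longrightarrow> prob (A z) > 0" "\<gamma> > 0"
  shows "\<exists>L>0. \<forall>z\<in>Z. 1 - \<gamma> \<le> prob {\<omega>\<in>space P. \<exists>k<L. (\<theta> ^^ k) \<omega> \<in> A z}"
proof -
  have "eventually (\<lambda>L. L > 0 \<and> (\<forall>z\<in>Z. 1 - \<gamma> \<le> prob {\<omega>\<in>space P. \<exists>k<L. (\<theta> ^^ k) \<omega> \<in> A z})) sequentially"
    using assms by (intro eventually_conj eventually_gt_at_top eventually_ball_finite ballI eventually_hitting) auto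
  then show ?thesis by (auto simp: eventually_sequentially)
qed

lemma prob_far_forever_eq_0:
  assumes p: "p \<in> common_fixed P f" and \<eta>: "\<eta> > 0"
  shows "prob {\<omega>\<in>space P. \<forall>n. \<eta> \<le> infdist (rand_iter f \<theta> n \<omega> x) (common_fixed P f)} = 0"
    (is "prob ?E = 0")
proof (rule ccontr)
  define c where "c = prob ?E"
  assume "prob ?E \<noteq> 0"
  then have c: "c > 0" using measure_nonneg[of P ?E] unfolding c_def by linarith
  define R where "R = dist x p"
  obtain Z r A where Z: "finite Z" "{y. dist y p \<le> R \<and> \<eta> \<le> infdist y (common_fixed P f)} \<subseteq> (\<Union>z\<in>Z. ball z (r z))"
    and r: "\<And>z. z \<in> Z \<Longrightarrow> r z > 0" and A: "\<And>z. z \<in> Z \<Longrightarrow> A z \<in> sets P" "\<And>z. z \<in> Z \<Longrightarrow> prob (A z) > 0"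
    and A_decrease: "\<And>z \<omega> y. z \<in> Z \<Longrightarrow> \<omega> \<in> A z \<Longrightarrow> dist z y < 2 * r z \<Longrightarrow> dist (f \<omega> y) p \<le> dist y p - r z"
    using far_region_decrease_cover[OF p \<eta>] by blast
  define \<gamma> where "\<gamma> = c / (4 * (card Z + 1))"
  have \<gamma>: "\<gamma> > 0" using c unfolding \<gamma>_def by simp
  have "\<exists>L>0. \<forall>z\<in>Z. 1 - \<gamma> \<le> prob {\<omega>\<in>space P. \<exists>k<L. (\<theta> ^^ k) \<omega> \<in> A z}"
    by (rule exists_uniform_hitting_time[OF Z(1) A(1) A(2) \<gamma>])
  then obtain L where L: "L > 0" "\<forall>z\<in>Z. 1 - \<gamma> \<le> prob {\<omega>\<in>space P. \<exists>k<L. (\<theta> ^^ k) \<omega> \<in> A z}"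
    by blast
  define \<tau> where "\<tau> = Min (insert 1 (r ` Z)) / L"
  have \<tau>: "\<tau> > 0" "\<And>z. z \<in> Z \<Longrightarrow> real L * \<tau> \<le> r z"
    using Z(1) r L(1) unfolding \<tau>_def by (auto simp: Min_gr_iff)
  define \<beta> where "\<beta> = \<gamma> / L"
  obtain d Q where dQ: "d > 0" "Q \<in> sets P" "1 - \<beta> \<le> prob Q"
    "\<And>\<omega> y. \<omega> \<in> Q \<Longrightarrow> dist y p \<le> R \<Longrightarrow> dist y p - dist (f \<omega> y) p < d \<Longrightarrow> dist (f \<omega> y) y \<le> \<tau>"
    using exists_small_step_event[OF p \<tau>(1), of \<beta> R] c L(1) unfolding \<beta>_def \<gamma>_def by auto
  have E_covered: "AE \<omega> in P. \<omega> \<in> ?E \<longrightarrow> (\<forall>n. rand_iter f \<theta> n \<omega> x \<in> (\<Union>z\<in>Z. ball z (r z)))"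
    using AE_typical
  proof eventually_elim
    case (elim \<omega>)
    have "dist (rand_iter f \<theta> n \<omega> x) p \<le> R" for n
      using dist_rand_iter_antimono[OF elim p, of 0 n x] unfolding R_def by simp
    then show ?case using Z(2) by blast
  qed
  have "escape_estimate P \<theta> f S x p R Z r A L \<gamma> \<tau> d \<beta> Q ?E"
    using p Z(1) r A(1) A_decrease L(2) \<tau> dQ E_covered unfolding R_def
    by (intro escape_estimate.intro[OF random_paracontraction_axioms] escape_estimate_axioms.intro)
      (auto simp: less_imp_le)
  then interpret escape_estimate P \<theta> f S x p R Z r A L \<gamma> \<tau> d \<beta> Q ?E .
  have "c \<le> card Z * (\<gamma> + real L * \<beta>)" unfolding c_def by (rule prob_escape_le)
  also have "\<dots> = 2 * card Z * \<gamma>"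
    using L(1) unfolding \<beta>_def by simp
  also have "\<dots> < c" using c unfolding \<gamma>_def by (simp add: field_simps add_pos_nonneg)
  finally show False by simp
qed

lemma AE_rand_iter_converges:
  assumes p: "p \<in> common_fixed P f"
  shows "AE \<omega> in P. \<exists>c \<in> common_fixed P f. (\<lambda>n. rand_iter f \<theta> n \<omega> x) \<longlonglongrightarrow> c"
proof -
  have "AE \<omega> in P. \<forall>j::nat. \<exists>n. infdist (rand_iter f \<theta> n \<omega> x) (common_fixed P f) < 1 / Suc j"
    unfolding AE_all_countable
  proof
    fix j :: nat
    have "AE \<omega> in P. \<not> (\<forall>n. 1 / Suc j \<le> infdist (rand_iter f \<theta> n \<omega> x) (common_fixed P f))"
      using prob_far_forever_eq_0[OF p, of "1 / Suc j" x] by (subst prob_Collect_eq_0[symmetric]) auto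
    then show "AE \<omega> in P. \<exists>n. infdist (rand_iter f \<theta> n \<omega> x) (common_fixed P f) < 1 / Suc j"
      by (simp add: not_le)
  qed
  with AE_typical show ?thesis
  proof eventually_elim
    case (elim \<omega>)
    show ?case
    proof (rule Fejer_monotone_convergent)
      show "closed (common_fixed P f)" "common_fixed P f \<noteq> {}" using closed_common_fixed p by auto
      show "compact (cball p (dist x p))" by (rule proper) auto
      show "rand_iter f \<theta> n \<omega> x \<in> cball p (dist x p)" for n
        using dist_rand_iter_antimono[OF elim(1) p, of 0 n x] by (simp add: dist_commute)
      show "dist (rand_iter f \<theta> n \<omega> x) q \<le> dist (rand_iter f \<theta> m \<omega> x) q"
        if "q \<in> common_fixed P f" "m \<le> n" for q m n
        using dist_rand_iter_antimono[OF elim(1) that] .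
      show "\<exists>n. infdist (rand_iter f \<theta> n \<omega> x) (common_fixed P f) < e" if e: "e > 0" for e
      proof -
        obtain j :: nat where "1 / Suc j < e"
          using reals_Archimedean[OF e] by (auto simp: inverse_eq_divide)
        then show ?thesis using elim(2) by (meson less_trans)
      qed
    qed auto
  qed
qed

end

theorem theoremB:
  fixes P :: "'a measure" and \<theta> :: "'a \<Rightarrow> 'a" and f :: "'a \<Rightarrow> 'b::metric_space \<Rightarrow> 'b"
  assumes sep: "separable_space (euclidean :: 'b topology)"
    and proper: "\<And>S::'b set. closed S \<Longrightarrow> bounded S \<Longrightarrow> compact S"
    and erg: "ergodic_mpds P \<theta>"
    and para: "\<And>\<omega>. \<omega> \<in> space P \<Longrightarrow> paracontraction (f \<omega>)"
    and meas: "(\<lambda>(\<omega>, x). f \<omega> x) \<in> P \<Otimes>\<^sub>M borel \<rightarrow>\<^sub>M borel"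
    and ne: "common_fixed P f \<noteq> {}"
  shows "\<forall>x. AE \<omega> in P. \<exists>c \<in> common_fixed P f. (\<lambda>n. rand_iter f \<theta> n \<omega> x) \<longlonglongrightarrow> c"
proof
  fix x
  obtain S :: "'b set" where S: "countable S" "closure S = UNIV"
    using sep unfolding separable_space_def by auto
  have "random_paracontraction P \<theta> f S"
    using erg S proper para meas unfolding ergodic_mpds_def
    by (intro random_paracontraction.intro random_paracontraction_axioms.intro) auto
  then interpret random_paracontraction P \<theta> f S .
  obtain p where "p \<in> common_fixed P f" using ne by blast
  then show "AE \<omega> in P. \<exists>c \<in> common_fixed P f. (\<lambda>n. rand_iter f \<theta> n \<omega> x) \<longlonglongrightarrow> c"
    by (rule AE_rand_iter_converges)
qed

end
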